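(* Let $W$ be the set of states $s$ from which the team has a collective strategy ensuring that $T$ is reached with probability $1$ against every opponent strategy (plays starting at $s$). Define $W_0=T$ and, for $k\ge0$, $W_{k+1}=W_k\cup\{s\in W\mid$ there is a collective selector $\bar\xi_\Pi$ at $s$ such that for every opponent action $b\in\mathsf{Av}_{\mathsf O}(s)$, $\sum_{t\in W_k}\sum_{\bar a_\Pi}\big(\prod_{p\in\Pi}\xi_p(a_p)\big)\delta(s,(\bar a_\Pi,b))(t)>0$ and $\sum_{t\in W}\sum_{\bar a_\Pi}\big(\prod_{p\in\Pi}\xi_p(a_p)\big)\delta(s,(\bar a_\Pi,b))(t)=1\}$. Then there exists $m$ with $W_m=W$.
   Context: A game structure is $G=(\Sigma,S,(A_p)_{p\in\Sigma},(\mathsf{Av}_p)_{p\in\Sigma},\delta)$ with players $\Sigma$, finite state set $S$, finite action sets $A_p$, nonempty available-action sets $\mathsf{Av}_p(s)\subseteq A_p$, and transition function $\delta$ mapping a state and an available action profile to a probability distribution on $S$. The team is $\Pi\subseteq\Sigma$, $\Sigma\setminus\Pi=\{\mathsf O\}$ (opponent), and the target set $T\subseteq S$ is absorbing. Strategies map histories ending in $s$ to distributions over $\mathsf{Av}_p(s)$; a collective strategy is a tuple of strategies for the team players, who randomise independently (joint action probabilities are products of individual ones). A collective selector at $s$ is a tuple $(\xi_p)_{p\in\Pi}$ of distributions $\xi_p$ over $\mathsf{Av}_p(s)$; $\bar a_\Pi$ ranges over $\prod_{p\in\Pi}\mathsf{Av}_p(s)$. *)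

theory Defs
  imports "HOL-Probability.Probability"
begin

text \<open>Game structure: players Pl (finite), opponent opp in Pl, team = Pl - {opp};
  states: finite type 's; actions: one ambient type 'a, available actions Av p s;
  transition delta s alpha, alpha an action profile (function on players, undefined outside Pl).\<close>

definition game_structure :: "'p set \<Rightarrow> 'p \<Rightarrow> ('p \<Rightarrow> 's \<Rightarrow> 'a set) \<Rightarrow> bool" where
  "game_structure Pl opp Av \<longleftrightarrow> finite Pl \<and> opp \<in> Pl \<and>
     (\<forall>p\<in>Pl. \<forall>s. Av p s \<noteq> {} \<and> finite (Av p s))"

definition avail_profiles :: "'p set \<Rightarrow> ('p \<Rightarrow> 's \<Rightarrow> 'a set) \<Rightarrow> 's \<Rightarrow> ('p \<Rightarrow> 'a) set" where
  "avail_profiles Pl Av s = PiE Pl (\<lambda>p. Av p s)"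

definition absorbing :: "'p set \<Rightarrow> ('p \<Rightarrow> 's \<Rightarrow> 'a set) \<Rightarrow> ('s \<Rightarrow> ('p \<Rightarrow> 'a) \<Rightarrow> 's pmf) \<Rightarrow> 's set \<Rightarrow> bool" where
  "absorbing Pl Av delta T \<longleftrightarrow>
     (\<forall>s\<in>T. \<forall>\<alpha>\<in>avail_profiles Pl Av s. set_pmf (delta s \<alpha>) \<subseteq> T)"

definition strategy :: "('p \<Rightarrow> 's \<Rightarrow> 'a set) \<Rightarrow> 'p \<Rightarrow> ('s list \<Rightarrow> 'a pmf) \<Rightarrow> bool" where
  "strategy Av p \<sigma> \<longleftrightarrow> (\<forall>h. h \<noteq> [] \<longrightarrow> set_pmf (\<sigma> h) \<subseteq> Av p (last h))"

definition collective_strategy :: "('p \<Rightarrow> 's \<Rightarrow> 'a set) \<Rightarrow> 'p set \<Rightarrow> ('p \<Rightarrow> 's list \<Rightarrow> 'a pmf) \<Rightarrow> bool" where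
  "collective_strategy Av Team \<sigma> \<longleftrightarrow> (\<forall>p\<in>Team. strategy Av p (\<sigma> p))"

definition combine :: "'p \<Rightarrow> ('p \<Rightarrow> 's list \<Rightarrow> 'a pmf) \<Rightarrow> ('s list \<Rightarrow> 'a pmf) \<Rightarrow> ('p \<Rightarrow> 's list \<Rightarrow> 'a pmf)" where
  "combine opp \<sigma> \<tau> = (\<lambda>p. if p = opp then \<tau> else \<sigma> p)"

definition next_dist :: "'p set \<Rightarrow> ('s \<Rightarrow> ('p \<Rightarrow> 'a) \<Rightarrow> 's pmf) \<Rightarrow> ('p \<Rightarrow> 's list \<Rightarrow> 'a pmf)
    \<Rightarrow> 's list \<Rightarrow> 's pmf" where
  "next_dist Pl delta \<sigma> h = bind_pmf (Pi_pmf Pl undefined (\<lambda>p. \<sigma> p h)) (\<lambda>\<alpha>. delta (last h) \<alpha>)"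

fun reach_within :: "('s list \<Rightarrow> 's pmf) \<Rightarrow> 's set \<Rightarrow> nat \<Rightarrow> 's list \<Rightarrow> real" where
  "reach_within P T 0 h = (if last h \<in> T then 1 else 0)"
| "reach_within P T (Suc n) h = (if last h \<in> T then 1
      else measure_pmf.expectation (P h) (\<lambda>t. reach_within P T n (h @ [t])))"

text \<open>Probability that the play from s under profile sigma eventually visits T
  (limit = supremum of the nondecreasing finite-horizon probabilities).\<close>
definition reach_prob :: "'p set \<Rightarrow> ('s \<Rightarrow> ('p \<Rightarrow> 'a) \<Rightarrow> 's pmf) \<Rightarrow> 's set
    \<Rightarrow> ('p \<Rightarrow> 's list \<Rightarrow> 'a pmf) \<Rightarrow> 's \<Rightarrow> real" where
  "reach_prob Pl delta T \<sigma> s = (SUP n. reach_within (next_dist Pl delta \<sigma>) T n [s])"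

definition win_set :: "'p set \<Rightarrow> 'p \<Rightarrow> ('p \<Rightarrow> 's \<Rightarrow> 'a set) \<Rightarrow> ('s \<Rightarrow> ('p \<Rightarrow> 'a) \<Rightarrow> 's pmf)
    \<Rightarrow> 's set \<Rightarrow> 's set" where
  "win_set Pl opp Av delta T = {s. \<exists>\<sigma>. collective_strategy Av (Pl - {opp}) \<sigma> \<and>
      (\<forall>\<tau>. strategy Av opp \<tau> \<longrightarrow> reach_prob Pl delta T (combine opp \<sigma> \<tau>) s = 1)}"

definition collective_selector :: "('p \<Rightarrow> 's \<Rightarrow> 'a set) \<Rightarrow> 'p set \<Rightarrow> 's \<Rightarrow> ('p \<Rightarrow> 'a pmf) \<Rightarrow> bool" where
  "collective_selector Av Team s \<xi> \<longleftrightarrow> (\<forall>p\<in>Team. set_pmf (\<xi> p) \<subseteq> Av p s)"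

definition sel_mass :: "'p set \<Rightarrow> 'p \<Rightarrow> ('p \<Rightarrow> 's \<Rightarrow> 'a set) \<Rightarrow> ('s \<Rightarrow> ('p \<Rightarrow> 'a) \<Rightarrow> 's pmf)
    \<Rightarrow> 's \<Rightarrow> ('p \<Rightarrow> 'a pmf) \<Rightarrow> 'a \<Rightarrow> 's set \<Rightarrow> real" where
  "sel_mass Pl opp Av delta s \<xi> b X =
     (\<Sum>t\<in>X. \<Sum>a\<in>PiE (Pl - {opp}) (\<lambda>p. Av p s).
        (\<Prod>p\<in>Pl - {opp}. pmf (\<xi> p) (a p)) * pmf (delta s (a(opp := b))) t)"

fun W_seq :: "'p set \<Rightarrow> 'p \<Rightarrow> ('p \<Rightarrow> 's \<Rightarrow> 'a set) \<Rightarrow> ('s \<Rightarrow> ('p \<Rightarrow> 'a) \<Rightarrow> 's pmf)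
    \<Rightarrow> 's set \<Rightarrow> nat \<Rightarrow> 's set" where
  "W_seq Pl opp Av delta T 0 = T"
| "W_seq Pl opp Av delta T (Suc k) = W_seq Pl opp Av delta T k \<union>
     {s \<in> win_set Pl opp Av delta T. \<exists>\<xi>. collective_selector Av (Pl - {opp}) s \<xi> \<and>
        (\<forall>b\<in>Av opp s. sel_mass Pl opp Av delta s \<xi> b (W_seq Pl opp Av delta T k) > 0 \<and>
                      sel_mass Pl opp Av delta s \<xi> b (win_set Pl opp Av delta T) = 1)}"

end

theory Submission
  imports Defs
begin

text \<open>The sets \<open>W\<^sub>k\<close> increase inside the finite state space, so they stabilise at some
  \<open>W\<^sub>m \<subseteq> W\<close>. If some \<open>s \<in> W - W\<^sub>m\<close> existed, no state of \<open>W - W\<^sub>m\<close> would admit a progressing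
  selector, so against the team's winning strategy from \<open>s\<close> the opponent can answer every
  selector there by an action that either gives \<open>W\<^sub>m\<close> probability 0 or leaves \<open>W\<close> with
  positive probability. If the play never leaves \<open>W\<close>, it is trapped in \<open>W - W\<^sub>m\<close>, which is
  disjoint from \<open>T\<close>; if it leaves \<open>W\<close>, the opponent switches at the exit to a strategy that
  beats the team from there. Either way the team fails to win from \<open>s\<close>.\<close>

lemma expectation_pmf_finite:
  fixes f :: "'s::finite \<Rightarrow> real"
  shows "measure_pmf.expectation M f = (\<Sum>t\<in>UNIV. f t * pmf M t)"
  by (rule integral_measure_pmf_real) auto

lemma reach_within_bounds:
  fixes P :: "'s::finite list \<Rightarrow> 's pmf"
  shows "0 \<le> reach_within P T n h \<and> reach_within P T n h \<le> 1"
proof (induction n arbitrary: h)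
  case 0
  then show ?case by simp
next
  case (Suc n)
  have "(\<Sum>t\<in>UNIV. reach_within P T n (h @ [t]) * pmf (P h) t) \<le> (\<Sum>t\<in>UNIV. pmf (P h) t)"
    by (intro sum_mono) (use Suc pmf_nonneg in \<open>auto intro: mult_left_le_one_le\<close>)
  also have "\<dots> = 1"
    by (rule sum_pmf_eq_1) auto
  finally have "(\<Sum>t\<in>UNIV. reach_within P T n (h @ [t]) * pmf (P h) t) \<le> 1" .
  moreover have "0 \<le> (\<Sum>t\<in>UNIV. reach_within P T n (h @ [t]) * pmf (P h) t)"
    by (intro sum_nonneg) (use Suc in auto)
  ultimately show ?case
    by (simp add: expectation_pmf_finite)
qed

lemma reach_within_le_Suc:
  fixes P :: "'s::finite list \<Rightarrow> 's pmf"
  shows "reach_within P T n h \<le> reach_within P T (Suc n) h"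
proof (induction n arbitrary: h)
  case 0
  then show ?case
    using reach_within_bounds[of P T 0] by (auto simp: expectation_pmf_finite intro!: sum_nonneg)
next
  case (Suc n)
  have "(\<Sum>t\<in>UNIV. reach_within P T n (h @ [t]) * pmf (P h) t)
      \<le> (\<Sum>t\<in>UNIV. reach_within P T (Suc n) (h @ [t]) * pmf (P h) t)"
    by (intro sum_mono mult_right_mono Suc.IH) auto
  then show ?case
    by (simp only: reach_within.simps(2) expectation_pmf_finite) simp
qed

lemma reach_within_mono:
  fixes P :: "'s::finite list \<Rightarrow> 's pmf"
  assumes "n \<le> n'"
  shows "reach_within P T n h \<le> reach_within P T n' h"
  using lift_Suc_mono_le[of "\<lambda>n. reach_within P T n h", OF reach_within_le_Suc assms] .

lemma reach_within_le_reach_prob: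
  fixes s :: "'s::finite"
  shows "reach_within (next_dist Pl delta \<sigma>) T n [s] \<le> reach_prob Pl delta T \<sigma> s"
  unfolding reach_prob_def using reach_within_bounds
  by (intro cSUP_upper) (auto intro!: bdd_aboveI[of _ 1])

lemma reach_prob_le_1:
  fixes s :: "'s::finite"
  shows "reach_prob Pl delta T \<sigma> s \<le> 1"
  unfolding reach_prob_def using reach_within_bounds by (intro cSUP_least) auto

lemma reach_within_step_bound:
  fixes P :: "'s::finite list \<Rightarrow> 's pmf"
  assumes "last h \<notin> T"
  shows "reach_within P T (Suc n) h \<le> 1 - pmf (P h) t + pmf (P h) t * reach_within P T n (h @ [t])"
proof -
  let ?f = "\<lambda>u. reach_within P T n (h @ [u]) * pmf (P h) u"
  have "(\<Sum>u\<in>UNIV. ?f u) = ?f t + (\<Sum>u\<in>UNIV - {t}. ?f u)"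
    by (subst sum.remove[of _ t]) auto
  also have "(\<Sum>u\<in>UNIV - {t}. ?f u) \<le> (\<Sum>u\<in>UNIV - {t}. pmf (P h) u)"
    using reach_within_bounds by (intro sum_mono mult_left_le_one_le) auto
  also have "(\<Sum>u\<in>UNIV - {t}. pmf (P h) u) = 1 - pmf (P h) t"
    using sum_pmf_eq_1[of UNIV "P h"] by (subst sum_diff1) auto
  finally show ?thesis
    using assms by (simp add: expectation_pmf_finite mult.commute)
qed

fun path_prob :: "('s list \<Rightarrow> 's pmf) \<Rightarrow> 's list \<Rightarrow> 's list \<Rightarrow> real" where
  "path_prob P h [] = 1"
| "path_prob P h (t # ext) = pmf (P h) t * path_prob P (h @ [t]) ext"

lemma path_prob_snoc:
  "path_prob P h (ext @ [t]) = path_prob P h ext * pmf (P (h @ ext)) t"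
  by (induction ext arbitrary: h) auto

lemma path_prob_cong:
  assumes "\<And>i. i < length ext \<Longrightarrow> P (h @ take i ext) = P' (h @ take i ext)"
  shows "path_prob P h ext = path_prob P' h ext"
  using assms
proof (induction ext arbitrary: h)
  case Nil
  then show ?case by simp
next
  case (Cons t ext)
  have "P h = P' h"
    using Cons.prems[of 0] by simp
  moreover have "path_prob P (h @ [t]) ext = path_prob P' (h @ [t]) ext"
    using Cons.prems[of "Suc i" for i] by (intro Cons.IH) auto
  ultimately show ?case by simp
qed

lemma reach_within_path_bound:
  fixes P :: "'s::finite list \<Rightarrow> 's pmf"
  assumes "last h \<notin> T" and "set ext \<inter> T = {}"
  shows "reach_within P T (n + length ext) h
    \<le> 1 - path_prob P h ext + path_prob P h ext * reach_within P T n (h @ ext)"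
  using assms
proof (induction ext arbitrary: h)
  case Nil
  then show ?case by simp
next
  case (Cons t ext)
  let ?r = "reach_within P T (n + length ext) (h @ [t])"
  have IH: "?r \<le> 1 - path_prob P (h @ [t]) ext
      + path_prob P (h @ [t]) ext * reach_within P T n (h @ t # ext)"
    using Cons.IH[of "h @ [t]"] Cons.prems by auto
  have "reach_within P T (Suc (n + length ext)) h \<le> 1 - pmf (P h) t + pmf (P h) t * ?r"
    using Cons.prems by (intro reach_within_step_bound) auto
  moreover have "pmf (P h) t * ?r \<le> pmf (P h) t * (1 - path_prob P (h @ [t]) ext
      + path_prob P (h @ [t]) ext * reach_within P T n (h @ t # ext))"
    by (intro mult_left_mono IH) auto
  ultimately show ?case
    by (simp add: algebra_simps)
qed

lemma reach_within_shift:
  assumes "\<And>rest. P (h1 @ t # rest) = P' (t # rest)"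
  shows "reach_within P T n (h1 @ t # rest) = reach_within P' T n (t # rest)"
proof (induction n arbitrary: rest)
  case 0
  then show ?case by simp
next
  case (Suc n)
  have "reach_within P T n (h1 @ t # rest @ [u]) = reach_within P' T n (t # rest @ [u])" for u
    using Suc by (metis append_Cons append_assoc)
  then show ?case
    using assms by simp
qed

lemma reach_within_trapped:
  fixes P :: "'s::finite list \<Rightarrow> 's pmf"
  assumes "U \<inter> T = {}" and "last h \<in> U"
    and "\<And>ext. set ext \<subseteq> U \<Longrightarrow> path_prob P h ext > 0 \<Longrightarrow> set_pmf (P (h @ ext)) \<subseteq> U"
  shows "reach_within P T n h = 0"
  using assms(2,3)
proof (induction n arbitrary: h)
  case 0
  then show ?case using assms(1) by auto
next
  case (Suc n)
  have vanish: "reach_within P T n (h @ [t]) * pmf (P h) t = 0" for t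
  proof (cases "pmf (P h) t = 0")
    case False
    then have pos: "pmf (P h) t > 0"
      using pmf_nonneg[of "P h" t] by linarith
    have tU: "t \<in> U"
      using Suc.prems(2)[of "[]"] False by (auto simp: set_pmf_eq)
    have "reach_within P T n (h @ [t]) = 0"
    proof (rule Suc.IH)
      fix ext
      assume "set ext \<subseteq> U" "path_prob P (h @ [t]) ext > 0"
      then show "set_pmf (P ((h @ [t]) @ ext)) \<subseteq> U"
        using Suc.prems(2)[of "t # ext"] tU pos by simp
    qed (use tU in simp)
    then show ?thesis by simp
  qed simp
  then show ?case
    using Suc.prems(1) assms(1) by (auto simp: expectation_pmf_finite vanish)
qed

lemma next_dist_cong:
  assumes "\<And>p. p \<in> Pl \<Longrightarrow> \<sigma> p h = \<sigma>' p h'" and "last h = last h'"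
  shows "next_dist Pl delta \<sigma> h = next_dist Pl delta \<sigma>' h'"
  unfolding next_dist_def using assms by (simp cong: Pi_pmf_cong)

lemma prob_next_dist_eq_sel_mass:
  fixes X :: "'s::finite set"
  assumes fin: "finite Pl" and opp: "opp \<in> Pl"
    and finAv: "\<And>p. p \<in> Pl - {opp} \<Longrightarrow> finite (Av p s)"
    and sel: "collective_selector Av (Pl - {opp}) s (\<lambda>p. \<sigma> p h)"
    and s: "last h = s" and tau: "\<tau> h = return_pmf b"
  shows "measure_pmf.prob (next_dist Pl delta (combine opp \<sigma> \<tau>) h) X
       = sel_mass Pl opp Av delta s (\<lambda>p. \<sigma> p h) b X"
proof -
  let ?A = "Pl - {opp}"
  let ?M = "Pi_pmf ?A undefined (\<lambda>p. \<sigma> p h)"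
  have "Pi_pmf Pl undefined (\<lambda>p. combine opp \<sigma> \<tau> p h)
      = Pi_pmf (insert opp ?A) undefined (\<lambda>p. combine opp \<sigma> \<tau> p h)"
    using opp by (simp add: insert_absorb)
  also have "\<dots> = map_pmf (\<lambda>(y,f). f(opp:=y)) (pair_pmf (return_pmf b)
        (Pi_pmf ?A undefined (\<lambda>p. combine opp \<sigma> \<tau> p h)))"
    using fin by (subst Pi_pmf_insert) (auto simp: combine_def tau)
  also have "Pi_pmf ?A undefined (\<lambda>p. combine opp \<sigma> \<tau> p h) = ?M"
    by (rule Pi_pmf_cong) (auto simp: combine_def)
  finally have "Pi_pmf Pl undefined (\<lambda>p. combine opp \<sigma> \<tau> p h) = map_pmf (\<lambda>f. f(opp:=b)) ?M"
    by (simp add: pair_return_pmf1 map_pmf_comp fun_upd_def)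
  then have nd: "next_dist Pl delta (combine opp \<sigma> \<tau>) h = bind_pmf ?M (\<lambda>a. delta s (a(opp:=b)))"
    unfolding next_dist_def s by (simp add: bind_map_pmf)
  have finA: "finite (PiE ?A (\<lambda>p. Av p s))"
    using fin finAv by (intro finite_PiE) auto
  have supp: "a \<in> PiE ?A (\<lambda>p. Av p s)" if "a \<in> set_pmf ?M" for a
    using that sel fin
    by (auto simp: collective_selector_def set_Pi_pmf PiE_dflt_def PiE_def extensional_def)
  have "measure_pmf.prob (next_dist Pl delta (combine opp \<sigma> \<tau>) h) X
      = (\<Sum>t\<in>X. \<Sum>a\<in>PiE ?A (\<lambda>p. Av p s). pmf (delta s (a(opp:=b))) t * pmf ?M a)"
    unfolding nd measure_measure_pmf_finite[OF finite] pmf_bind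
    by (intro sum.cong refl integral_measure_pmf_real finA) (use supp in auto)
  also have "\<dots> = sel_mass Pl opp Av delta s (\<lambda>p. \<sigma> p h) b X"
    unfolding sel_mass_def using fin
    by (intro sum.cong refl, subst pmf_Pi') (auto simp: PiE_def extensional_def)
  finally show ?thesis .
qed

lemma T_subset_win_set:
  fixes Av :: "'p \<Rightarrow> 's::finite \<Rightarrow> 'a set"
  assumes "game_structure Pl opp Av"
  shows "T \<subseteq> win_set Pl opp Av delta T"
proof
  fix s assume sT: "s \<in> T"
  define \<sigma> :: "'p \<Rightarrow> 's list \<Rightarrow> 'a pmf" where "\<sigma> = (\<lambda>p h. return_pmf (SOME a. a \<in> Av p (last h)))"
  have "collective_strategy Av (Pl - {opp}) \<sigma>"
    using assms unfolding collective_strategy_def strategy_def \<sigma>_def game_structure_def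
    by (auto intro!: someI_ex[of "\<lambda>a. a \<in> Av _ _"])
  moreover have "reach_within (next_dist Pl delta (combine opp \<sigma> \<tau>)) T n [s] = 1" for \<tau> n
    using sT by (cases n) auto
  ultimately show "s \<in> win_set Pl opp Av delta T"
    unfolding win_set_def reach_prob_def by auto
qed

lemma collective_strategy_shift:
  assumes "collective_strategy Av Team \<sigma>"
  shows "collective_strategy Av Team (\<lambda>p h. \<sigma> p (h1 @ h))"
  using assms unfolding collective_strategy_def strategy_def
  by (metis append_is_Nil_conv last_appendR)

definition switch_after :: "'s list \<Rightarrow> ('s list \<Rightarrow> 'a pmf) \<Rightarrow> ('s list \<Rightarrow> 'a pmf) \<Rightarrow> 's list \<Rightarrow> 'a pmf"
  where "switch_after h1 \<tau>0 \<tau>' h =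
    (if length h1 < length h \<and> take (length h1) h = h1 then \<tau>' (drop (length h1) h) else \<tau>0 h)"

lemma switch_after_short: "length h \<le> length h1 \<Longrightarrow> switch_after h1 \<tau>0 \<tau>' h = \<tau>0 h"
  by (simp add: switch_after_def)

lemma strategy_switch_after:
  fixes Av :: "'p \<Rightarrow> 's \<Rightarrow> 'a set"
  assumes "strategy Av p \<tau>0" and "strategy Av p \<tau>'"
  shows "strategy Av p (switch_after h1 \<tau>0 \<tau>')"
  unfolding strategy_def
proof (intro allI impI)
  fix h :: "'s list"
  assume "h \<noteq> []"
  show "set_pmf (switch_after h1 \<tau>0 \<tau>' h) \<subseteq> Av p (last h)"
  proof (cases "length h1 < length h \<and> take (length h1) h = h1")
    case True
    then have "last h = last (drop (length h1) h)" "drop (length h1) h \<noteq> []"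
      by (auto simp: last_drop)
    then show ?thesis
      using True assms(2) unfolding switch_after_def strategy_def by metis
  next
    case False
    then show ?thesis
      using assms(1) \<open>h \<noteq> []\<close> by (auto simp: switch_after_def strategy_def)
  qed
qed

text \<open>If the opponent can reach a losing state \<open>t\<close> with positive probability \<open>q\<close> while
  avoiding \<open>T\<close>, it switches there to a strategy that wins with probability \<open>1 - c > 0\<close>
  against the team's continuation; \<open>T\<close> is then reached with probability at most
  \<open>1 - q + q c < 1\<close>.\<close>

lemma escape_defeats_collective_strategy:
  fixes Av :: "'p \<Rightarrow> 's::finite \<Rightarrow> 'a set" and Pl :: "'p set" and opp :: 'p
    and delta :: "'s \<Rightarrow> ('p \<Rightarrow> 'a) \<Rightarrow> 's pmf"
    and \<sigma> :: "'p \<Rightarrow> 's list \<Rightarrow> 'a pmf" and \<tau>0 :: "'s list \<Rightarrow> 'a pmf"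
  defines "P0 \<equiv> next_dist Pl delta (combine opp \<sigma> \<tau>0)"
  assumes cs: "collective_strategy Av (Pl - {opp}) \<sigma>" and st0: "strategy Av opp \<tau>0"
    and avoid: "s \<notin> T" "set (ext @ [t]) \<inter> T = {}"
    and pos: "path_prob P0 [s] (ext @ [t]) > 0"
    and lose: "t \<notin> win_set Pl opp Av delta T"
  shows "\<exists>\<tau>. strategy Av opp \<tau> \<and> reach_prob Pl delta T (combine opp \<sigma> \<tau>) s < 1"
proof -
  let ?h1 = "s # ext" and ?q = "path_prob P0 [s] (ext @ [t])"
  define \<sigma>' where "\<sigma>' = (\<lambda>p h. \<sigma> p (?h1 @ h))"
  have "collective_strategy Av (Pl - {opp}) \<sigma>'"
    unfolding \<sigma>'_def using cs by (rule collective_strategy_shift)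
  then obtain \<tau>' where st': "strategy Av opp \<tau>'"
    and "reach_prob Pl delta T (combine opp \<sigma>' \<tau>') t \<noteq> 1"
    using lose unfolding win_set_def by blast
  moreover define c where "c = reach_prob Pl delta T (combine opp \<sigma>' \<tau>') t"
  ultimately have c: "c < 1"
    using reach_prob_le_1 by (metis order_less_le)
  define \<tau> where "\<tau> = switch_after ?h1 \<tau>0 \<tau>'"
  define P where "P = next_dist Pl delta (combine opp \<sigma> \<tau>)"
  have shift: "P (?h1 @ t # rest) = next_dist Pl delta (combine opp \<sigma>' \<tau>') (t # rest)" for rest
    unfolding P_def \<tau>_def by (rule next_dist_cong) (auto simp: combine_def \<sigma>'_def switch_after_def)
  have same_path: "path_prob P [s] (ext @ [t]) = ?q"
    unfolding P_def P0_def \<tau>_def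
    by (rule path_prob_cong, rule next_dist_cong) (auto simp: combine_def switch_after_short)
  have "reach_within P T N [s] \<le> 1 - ?q + ?q * c" for N
  proof -
    have "reach_within P T N [s] \<le> reach_within P T (N + length (ext @ [t])) [s]"
      by (rule reach_within_mono) simp
    also have "\<dots> \<le> 1 - ?q + ?q * reach_within P T N (?h1 @ [t])"
      using reach_within_path_bound[of "[s]" T "ext @ [t]" P N] avoid same_path by simp
    also have "reach_within P T N (?h1 @ [t]) \<le> c"
      using reach_within_shift[of P ?h1 t, OF shift, of T N "[]"]
        reach_within_le_reach_prob unfolding c_def by simp
    finally show ?thesis
      using pos by (simp add: mult_left_mono)
  qed
  then have "reach_prob Pl delta T (combine opp \<sigma> \<tau>) s \<le> 1 - ?q + ?q * c"
    unfolding reach_prob_def P_def[symmetric] by (intro cSUP_least) auto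
  also have "\<dots> < 1"
    using pos c by (simp add: mult_less_cancel_left)
  finally show ?thesis
    using st0 st' by (auto simp: \<tau>_def intro: strategy_switch_after)
qed

lemma spoiling_strategy:
  fixes Av :: "'p \<Rightarrow> 's::finite \<Rightarrow> 'a set"
  assumes gs: "game_structure Pl opp Av"
    and cs: "collective_strategy Av (Pl - {opp}) \<sigma>"
    and spoil: "\<And>x \<xi>. x \<in> U \<Longrightarrow> collective_selector Av (Pl - {opp}) x \<xi> \<Longrightarrow>
      \<exists>b\<in>Av opp x. \<not> (sel_mass Pl opp Av delta x \<xi> b X > 0 \<and> sel_mass Pl opp Av delta x \<xi> b W = 1)"
  obtains \<tau> where "strategy Av opp \<tau>"
    and "\<And>h. h \<noteq> [] \<Longrightarrow> last h \<in> U \<Longrightarrow>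
      measure_pmf.prob (next_dist Pl delta (combine opp \<sigma> \<tau>) h) W = 1 \<Longrightarrow>
      measure_pmf.prob (next_dist Pl delta (combine opp \<sigma> \<tau>) h) X = 0"
proof -
  have fin: "finite Pl" and opp: "opp \<in> Pl" and Av: "\<And>p s. p \<in> Pl \<Longrightarrow> Av p s \<noteq> {} \<and> finite (Av p s)"
    using gs unfolding game_structure_def by auto
  have sel: "collective_selector Av (Pl - {opp}) (last h) (\<lambda>p. \<sigma> p h)" if "h \<noteq> []" for h
    using cs that unfolding collective_selector_def collective_strategy_def strategy_def by auto
  define spoils where "spoils h b \<longleftrightarrow> b \<in> Av opp (last h) \<and> (h \<noteq> [] \<and> last h \<in> U \<longrightarrow>
      \<not> (sel_mass Pl opp Av delta (last h) (\<lambda>p. \<sigma> p h) b X > 0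
         \<and> sel_mass Pl opp Av delta (last h) (\<lambda>p. \<sigma> p h) b W = 1))" for h b
  have "\<exists>b. spoils h b" for h
  proof (cases "h \<noteq> [] \<and> last h \<in> U")
    case True
    then show ?thesis
      using spoil[OF _ sel] unfolding spoils_def by blast
  next
    case False
    then show ?thesis
      using Av[OF opp] unfolding spoils_def by blast
  qed
  then obtain bf where "\<And>h. spoils h (bf h)"
    by metis
  then have bf: "\<And>h. bf h \<in> Av opp (last h)"
    and bf_spoils: "\<And>h. h \<noteq> [] \<Longrightarrow> last h \<in> U \<Longrightarrow>
      \<not> (sel_mass Pl opp Av delta (last h) (\<lambda>p. \<sigma> p h) (bf h) X > 0
         \<and> sel_mass Pl opp Av delta (last h) (\<lambda>p. \<sigma> p h) (bf h) W = 1)"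
    unfolding spoils_def by auto
  define \<tau> where "\<tau> = (\<lambda>h. return_pmf (bf h) :: 'a pmf)"
  show thesis
  proof
    show "strategy Av opp \<tau>"
      using bf unfolding strategy_def \<tau>_def by auto
  next
    fix h :: "'s list"
    assume h: "h \<noteq> []" "last h \<in> U"
    have "measure_pmf.prob (next_dist Pl delta (combine opp \<sigma> \<tau>) h) Y
        = sel_mass Pl opp Av delta (last h) (\<lambda>p. \<sigma> p h) (bf h) Y" for Y
      by (rule prob_next_dist_eq_sel_mass[OF fin opp]) (use Av sel h in \<open>auto simp: \<tau>_def\<close>)
    then show "measure_pmf.prob (next_dist Pl delta (combine opp \<sigma> \<tau>) h) W = 1 \<Longrightarrow>
        measure_pmf.prob (next_dist Pl delta (combine opp \<sigma> \<tau>) h) X = 0"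
      using bf_spoils[OF h] measure_nonneg[of _ X] by (metis order_neq_le_trans)
  qed
qed

lemma win_set_subset_if_no_progress:
  fixes Av :: "'p \<Rightarrow> 's::finite \<Rightarrow> 'a set" and Pl :: "'p set" and opp :: 'p
    and delta :: "'s \<Rightarrow> ('p \<Rightarrow> 'a) \<Rightarrow> 's pmf" and T :: "'s set"
  defines "W \<equiv> win_set Pl opp Av delta T"
  assumes gs: "game_structure Pl opp Av" and TX: "T \<subseteq> X"
    and no_progress: "\<And>x \<xi>. x \<in> W - X \<Longrightarrow> collective_selector Av (Pl - {opp}) x \<xi> \<Longrightarrow>
      \<exists>b\<in>Av opp x. \<not> (sel_mass Pl opp Av delta x \<xi> b X > 0 \<and> sel_mass Pl opp Av delta x \<xi> b W = 1)"
  shows "W \<subseteq> X"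
proof
  fix s
  assume "s \<in> W"
  then obtain \<sigma> where cs: "collective_strategy Av (Pl - {opp}) \<sigma>"
    and win: "\<And>\<tau>. strategy Av opp \<tau> \<Longrightarrow> reach_prob Pl delta T (combine opp \<sigma> \<tau>) s = 1"
    unfolding W_def win_set_def by blast
  show "s \<in> X"
  proof (rule ccontr)
    assume "s \<notin> X"
    define U where "U = W - X"
    have sU: "s \<in> U" and UT: "U \<inter> T = {}"
      using \<open>s \<in> W\<close> \<open>s \<notin> X\<close> TX by (auto simp: U_def)
    obtain \<tau>0 where st0: "strategy Av opp \<tau>0"
      and spoils: "\<And>h. h \<noteq> [] \<Longrightarrow> last h \<in> U \<Longrightarrow>
        measure_pmf.prob (next_dist Pl delta (combine opp \<sigma> \<tau>0) h) W = 1 \<Longrightarrow>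
        measure_pmf.prob (next_dist Pl delta (combine opp \<sigma> \<tau>0) h) X = 0"
      using spoiling_strategy[OF gs cs no_progress, folded U_def] by metis
    define P0 where "P0 = next_dist Pl delta (combine opp \<sigma> \<tau>0)"
    show False
    proof (cases "\<exists>ext t. set ext \<subseteq> U \<and> path_prob P0 [s] (ext @ [t]) > 0 \<and> t \<notin> W")
      case True
      then obtain ext t where "set ext \<subseteq> U" and pos: "path_prob P0 [s] (ext @ [t]) > 0"
        and lose: "t \<notin> W"
        by blast
      moreover have "t \<notin> T"
        using lose T_subset_win_set[OF gs] unfolding W_def by blast
      ultimately have "set (ext @ [t]) \<inter> T = {}" and "s \<notin> T"
        using sU UT by auto
      then obtain \<tau> where "strategy Av opp \<tau>" "reach_prob Pl delta T (combine opp \<sigma> \<tau>) s < 1"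
        using escape_defeats_collective_strategy[OF cs st0 _ _ pos[unfolded P0_def] lose[unfolded W_def]]
        by blast
      then show False
        using win by fastforce
    next
      case False
      have "set_pmf (P0 ([s] @ ext)) \<subseteq> U" if "set ext \<subseteq> U" "path_prob P0 [s] ext > 0" for ext
      proof -
        have "set_pmf (P0 ([s] @ ext)) \<subseteq> W"
          using False that by (auto simp: path_prob_snoc set_pmf_eq)
        then have "measure_pmf.prob (P0 ([s] @ ext)) W = 1"
          by (subst measure_pmf.prob_eq_1) (auto simp: AE_measure_pmf_iff)
        moreover have "last ([s] @ ext) \<in> U"
          using sU that(1) by (cases ext rule: rev_cases) auto
        ultimately have "measure_pmf.prob (P0 ([s] @ ext)) X = 0"
          using spoils unfolding P0_def by simp
        then show ?thesis
          using \<open>set_pmf (P0 ([s] @ ext)) \<subseteq> W\<close> by (auto simp: measure_pmf_zero_iff U_def)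
      qed
      then have "reach_within P0 T n [s] = 0" for n
        using reach_within_trapped[OF UT, of "[s]"] sU by simp
      then have "reach_prob Pl delta T (combine opp \<sigma> \<tau>0) s = 0"
        unfolding reach_prob_def P0_def[symmetric] by simp
      then show False
        using win[OF st0] by simp
    qed
  qed
qed

lemma W_seq_subset_win_set:
  fixes Av :: "'p \<Rightarrow> 's::finite \<Rightarrow> 'a set"
  assumes "game_structure Pl opp Av"
  shows "W_seq Pl opp Av delta T k \<subseteq> win_set Pl opp Av delta T"
  using T_subset_win_set[OF assms] by (induction k) auto

lemma W_seq_stabilises:
  fixes Av :: "'p \<Rightarrow> 's::finite \<Rightarrow> 'a set"
  shows "\<exists>m. W_seq Pl opp Av delta T (Suc m) = W_seq Pl opp Av delta T m"
proof -
  let ?W = "W_seq Pl opp Av delta T"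
  have "mono ?W"
    unfolding mono_iff_le_Suc by auto
  moreover have "\<forall>n. ?W n = ?W (Suc n) \<longrightarrow> ?W (Suc n) = ?W (Suc (Suc n))"
    by simp
  ultimately obtain N where "\<forall>n\<ge>N. ?W N = ?W n"
    using finite_mono_remains_stable_implies_strict_prefix[of ?W] by auto
  then have "?W (Suc N) = ?W N"
    by (metis le_SucI order_refl)
  then show ?thesis ..
qed

theorem lemma8:
  fixes Pl :: "'p set" and opp :: 'p and Av :: "'p \<Rightarrow> 's::finite \<Rightarrow> 'a set"
    and delta :: "'s \<Rightarrow> ('p \<Rightarrow> 'a) \<Rightarrow> 's pmf" and T :: "'s set"
  assumes "game_structure Pl opp Av"
    and "absorbing Pl Av delta T"
  shows "\<exists>m. W_seq Pl opp Av delta T m = win_set Pl opp Av delta T"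
proof -
  let ?W = "W_seq Pl opp Av delta T" and ?Win = "win_set Pl opp Av delta T"
  obtain m where stable: "?W (Suc m) = ?W m"
    using W_seq_stabilises[of Pl opp Av delta T] by blast
  have "?Win \<subseteq> ?W m"
  proof (rule win_set_subset_if_no_progress[OF assms(1)])
    show "T \<subseteq> ?W m"
      by (induction m) auto
    show "\<exists>b\<in>Av opp x. \<not> (sel_mass Pl opp Av delta x \<xi> b (?W m) > 0
        \<and> sel_mass Pl opp Av delta x \<xi> b ?Win = 1)"
      if "x \<in> ?Win - ?W m" "collective_selector Av (Pl - {opp}) x \<xi>" for x \<xi>
      using that stable[unfolded W_seq.simps(2)] by blast
  qed
  then show ?thesis
    using W_seq_subset_win_set[OF assms(1)] by blast
qed

end
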